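(* Let $q$ be a power of $2$, $c\in\mathbb{F}_q^*$, and $f(X)=X(X^{q-1}-c)^{q+1}$ as a map $\mathbb{F}_{q^2}\to\mathbb{F}_{q^2}$. Let $\mathrm{Fix}(f)=\{\alpha\in\mathbb{F}_{q^2}:f(\alpha)=\alpha\}$. Then $|\mathrm{Fix}(f)|=2q-1$ if $\operatorname{Tr}(1/c)=1$, and $|\mathrm{Fix}(f)|=1$ if $\operatorname{Tr}(1/c)=0$.
   Context: $\operatorname{Tr}:\mathbb{F}_q\to\mathbb{F}_2$ denotes the absolute trace function. *)

theory Defs
  imports Main
begin

text \<open>Absolute trace from F_q to F_2, q = 2^m, with F_q viewed as a subfield of
  an ambient field of characteristic 2: Tr(x) = x + x^2 + x^4 + ... + x^(2^(m-1)).
  Its values lie in the prime field {0,1}.\<close>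
definition abs_trace :: "nat \<Rightarrow> 'a::field \<Rightarrow> 'a" where
  "abs_trace m x = (\<Sum>i<m. x ^ (2 ^ i))"

definition fmap :: "nat \<Rightarrow> 'a::field \<Rightarrow> 'a \<Rightarrow> 'a" where
  "fmap q c x = x * (x ^ (q - 1) - c) ^ (q + 1)"

end

theory Submission
  imports Defs "HOL-Number_Theory.Residues" "HOL-Computational_Algebra.Polynomial"
begin

text \<open>For \<open>\<alpha> \<noteq> 0\<close> put \<open>y = \<alpha>^(q-1)\<close>, so that \<open>y^(q+1) = 1\<close>. In characteristic 2 the
  fixed-point equation \<open>(y - c)^(q+1) = 1\<close> reads \<open>(y^q + c)(y + c) = 1\<close>, which for such \<open>y\<close>
  is the quadratic \<open>y^2 + c y + 1 = 0\<close>. With \<open>z = y/c\<close> it becomes \<open>z^2 + z = 1/c^2\<close>, and as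
  \<open>Tr(z^2 + z) = z^q + z\<close>, a root with \<open>y^(q+1) = 1\<close> (equivalently \<open>y^q = c + y\<close>) forces
  \<open>Tr(1/c) = 1\<close>. Conversely, the quadratic always has a root \<open>r\<close> in \<open>\<bbbF>_(q^2)\<close>: the elements
  of trace zero over \<open>\<bbbF>_2\<close> are, by counting, exactly the values of \<open>z^2 + z\<close>, and \<open>1/c^2\<close> is
  one of them. If \<open>Tr(1/c) = 1\<close> then \<open>r^q \<noteq> r\<close>, so \<open>r^q\<close> is the other root \<open>r + c\<close> and both
  roots satisfy \<open>y^(q+1) = r (r + c) = 1\<close>. Every such \<open>y\<close> has exactly \<open>q - 1\<close> preimages under
  \<open>\<alpha> \<mapsto> \<alpha>^(q-1)\<close>, which gives \<open>1 + 2(q - 1)\<close> fixed points.\<close>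

section \<open>Finite fields\<close>

lemma power_card_minus_one_eq_one:
  fixes x :: "'a::{field,finite}"
  assumes "x \<noteq> 0"
  shows "x ^ (card (UNIV :: 'a set) - 1) = 1"
proof -
  let ?U = "UNIV - {0::'a}"
  have "\<Prod>?U = (\<Prod>y\<in>?U. x * y)"
    by (rule prod.reindex_bij_witness[of _ "\<lambda>y. x * y" "\<lambda>y. y / x"]) (use assms in auto)
  also have "\<dots> = x ^ card ?U * \<Prod>?U"
    by (simp add: prod.distrib)
  finally have "x ^ card ?U = 1"
    by (simp add: prod_zero_iff)
  then show ?thesis
    by (simp add: card_Diff_singleton)
qed

lemma power_card_eq_self:
  fixes x :: "'a::{field,finite}"
  shows "x ^ card (UNIV :: 'a set) = x"
proof -
  have "card (UNIV :: 'a set) = Suc (card (UNIV :: 'a set) - 1)"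
    by (simp add: card_gt_0_iff)
  then have "x ^ card (UNIV :: 'a set) = x * x ^ (card (UNIV :: 'a set) - 1)"
    by (metis power_Suc)
  then show ?thesis
    using power_card_minus_one_eq_one[of x] by (cases "x = 0") auto
qed

lemma CHAR_eq_2_if_card_eq_power_2:
  assumes "card (UNIV :: 'a::{field,finite} set) = 2 ^ n"
  shows "CHAR('a) = 2"
proof -
  have "prime CHAR('a)"
    by (simp add: finite_imp_CHAR_pos prime_CHAR_semidom)
  moreover have "CHAR('a) dvd 2 ^ n"
    using CHAR_dvd_CARD[where 'a='a] assms by simp
  ultimately show ?thesis
    by (metis prime_dvd_power primes_dvd_imp_eq two_is_prime_nat)
qed

lemma CHAR_eq_2_if_card_eq_square_power_2:
  assumes "card (UNIV :: 'a::{field,finite} set) = q ^ 2" and "q = 2 ^ m"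
  shows "CHAR('a) = 2"
  using assms by (intro CHAR_eq_2_if_card_eq_power_2[of "2 * m"]) (metis power_mult mult.commute)

lemma card_power_eq_le:
  fixes y :: "'a::field"
  assumes "n \<ge> 1"
  shows "card {x. x ^ n = y} \<le> n"
proof -
  define p where "p = monom (1::'a) n - [:y:]"
  have "coeff p n = 1"
    using assms by (cases n) (simp_all add: p_def)
  then have "card {x. poly p x = 0} \<le> degree p"
    by (intro card_poly_roots_bound) auto
  moreover have "degree p \<le> n"
    unfolding p_def by (intro degree_diff_le degree_monom_le) simp
  moreover have "{x. poly p x = 0} = {x. x ^ n = y}"
    by (auto simp: p_def poly_monom)
  ultimately show ?thesis
    by simp
qed

lemma card_eq_sum_card_fibres:
  assumes "finite A" "finite B" "h ` A \<subseteq> B"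
  shows "card A = (\<Sum>b\<in>B. card {a\<in>A. h a = b})"
proof -
  have "A = (\<Union>b\<in>B. {a\<in>A. h a = b})"
    using assms(3) by auto
  also have "card \<dots> = (\<Sum>b\<in>B. card {a\<in>A. h a = b})"
    using assms by (intro card_UN_disjoint) auto
  finally show ?thesis .
qed

lemma card_power_eq_root_of_unity:
  fixes y :: "'a::{field,finite}"
  assumes card: "card (UNIV :: 'a set) = d * e + 1" and "d \<ge> 1" "e \<ge> 1"
    and y: "y ^ e = 1"
  shows "card {x. x ^ d = y} = d"
proof -
  \<comment> \<open>\<open>x \<mapsto> x^d\<close> maps the \<open>d e\<close> units into the at most \<open>e\<close> roots of unity with fibres of size
    at most \<open>d\<close>, so every fibre over a root of unity is full.\<close>
  define F where "F u = {x::'a. x ^ d = u}" for u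
  define U where "U = {u::'a. u ^ e = 1}"
  have "(x ^ d) ^ e = 1" if "x \<noteq> 0" for x :: 'a
    using power_card_minus_one_eq_one[OF that] card by (simp add: power_mult)
  then have "card (UNIV - {0::'a}) = (\<Sum>u\<in>U. card {x \<in> UNIV - {0}. x ^ d = u})"
    by (intro card_eq_sum_card_fibres) (auto simp: U_def)
  also have "\<dots> = (\<Sum>u\<in>U. card (F u))"
  proof (intro sum.cong refl arg_cong[where f = card])
    fix u assume "u \<in> U"
    then have "u \<noteq> 0"
      using \<open>e \<ge> 1\<close> by (auto simp: U_def power_0_left)
    then show "{x \<in> UNIV - {0}. x ^ d = u} = F u"
      using \<open>d \<ge> 1\<close> by (auto simp: F_def power_0_left)
  qed
  also have "\<dots> = card (F y) + (\<Sum>u\<in>U - {y}. card (F u))"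
    using y by (simp add: U_def sum.remove)
  also have "(\<Sum>u\<in>U - {y}. card (F u)) \<le> card (U - {y}) * d"
    using sum_bounded_above[of "U - {y}" "\<lambda>u. card (F u)" d] card_power_eq_le[OF \<open>d \<ge> 1\<close>]
    by (auto simp: F_def)
  also have "card (U - {y}) \<le> e - 1"
  proof -
    have "card U \<le> e"
      unfolding U_def using \<open>e \<ge> 1\<close> by (rule card_power_eq_le)
    then show ?thesis
      using y by (simp add: U_def card_Diff_singleton diff_le_mono)
  qed
  finally have "d * e \<le> card (F y) + (e - 1) * d"
    using card by (simp add: card_Diff_singleton)
  then have "d \<le> card (F y)"
    using \<open>e \<ge> 1\<close> by (cases e) (simp_all add: algebra_simps)
  with card_power_eq_le[OF \<open>d \<ge> 1\<close>, of y] show ?thesis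
    by (simp add: F_def)
qed

lemma power_q_minus_one_root_of_unity:
  fixes a :: "'a::{field,finite}"
  assumes "card (UNIV :: 'a set) = q ^ 2" and "a \<noteq> 0"
  shows "(a ^ (q - 1)) ^ (q + 1) = 1"
proof -
  have "(a ^ (q - 1)) ^ (q + 1) = a ^ ((q - 1) * (q + 1))"
    by (rule power_mult[symmetric])
  also have "(q - 1) * (q + 1) = card (UNIV :: 'a set) - 1"
    using assms(1) by (cases q) (simp_all add: power2_eq_square algebra_simps)
  finally show ?thesis
    using power_card_minus_one_eq_one[OF assms(2)] by simp
qed

section \<open>Characteristic two and the absolute trace\<close>

lemma add_self_CHAR_2:
  assumes "CHAR('a::ring_1) = 2"
  shows "x + x = (0::'a)"
  by (metis assms add.right_inverse uminus_CHAR_2)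

lemma add_eq_0_iff_CHAR_2:
  assumes "CHAR('a::ring_1) = 2"
  shows "x + y = (0::'a) \<longleftrightarrow> x = y"
  by (metis assms add_self_CHAR_2 minus_CHAR_2 right_minus_eq)

lemma abs_trace_add:
  "abs_trace (a + b) x = abs_trace a x + abs_trace b (x ^ 2 ^ a)"
  by (induction b) (simp_all add: abs_trace_def power_add power_mult add.assoc)

lemma abs_trace_square:
  fixes x :: "'a::field"
  assumes "x ^ 2 ^ m = x"
  shows "abs_trace m (x ^ 2) = abs_trace m x"
proof -
  have "abs_trace m (x ^ 2) + x ^ 2 ^ 0 = (\<Sum>i<Suc m. x ^ 2 ^ i)"
    unfolding abs_trace_def sum.lessThan_Suc_shift
    by (simp add: power_mult[symmetric] mult.commute)
  also have "\<dots> = abs_trace m x + x"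
    using assms by (simp add: abs_trace_def)
  finally show ?thesis
    by simp
qed

lemma abs_trace_artin_schreier:
  fixes w :: "'a::field"
  assumes "CHAR('a) = 2"
  shows "abs_trace m (w ^ 2 + w) = w ^ 2 ^ m + w"
proof -
  have "abs_trace m (w ^ 2 + w) = (\<Sum>i<m. w ^ 2 ^ Suc i - w ^ 2 ^ i)"
    unfolding abs_trace_def
  proof (intro sum.cong refl)
    fix i
    have "(w ^ 2 + w) ^ 2 ^ i = (w ^ 2) ^ 2 ^ i + w ^ 2 ^ i"
      using assms by (intro freshmans_dream') simp_all
    then show "(w ^ 2 + w) ^ 2 ^ i = w ^ 2 ^ Suc i - w ^ 2 ^ i"
      using assms by (simp add: minus_CHAR_2 power_mult[symmetric] mult.commute)
  qed
  also have "\<dots> = w ^ 2 ^ m - w"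
    by (subst sum_lessThan_telescope) simp
  finally show ?thesis
    using assms by (simp add: minus_CHAR_2)
qed

lemma card_abs_trace_eq_0_le:
  assumes "k \<ge> 1"
  shows "card {x::'a::field. abs_trace k x = 0} \<le> 2 ^ (k - 1)"
proof -
  define p where "p = (\<Sum>i<k. monom (1::'a) (2 ^ i))"
  have "coeff p (2 ^ (k - 1)) = (\<Sum>i<k. if i = k - 1 then 1 else 0)"
    unfolding p_def coeff_sum coeff_monom by (intro sum.cong) auto
  also have "\<dots> = 1"
    using assms by simp
  finally have "card {x. poly p x = 0} \<le> degree p"
    by (intro card_poly_roots_bound) auto
  moreover have "degree p \<le> 2 ^ (k - 1)"
    unfolding p_def
  proof (intro degree_sum_le)
    fix i assume "i \<in> {..<k}"
    then have "(2::nat) ^ i \<le> 2 ^ (k - 1)"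
      by (intro power_increasing) auto
    then show "degree (monom (1::'a) (2 ^ i)) \<le> 2 ^ (k - 1)"
      using degree_monom_le order_trans by blast
  qed simp
  moreover have "poly p x = abs_trace k x" for x
    by (simp add: p_def poly_sum poly_monom abs_trace_def)
  ultimately show ?thesis
    by simp
qed

lemma artin_schreier_fibre_CHAR_2:
  fixes a b :: "'a::field"
  assumes "CHAR('a) = 2"
  shows "a ^ 2 + a = b ^ 2 + b \<longleftrightarrow> a = b \<or> a = b + 1"
proof -
  have "(a + b) * (a + (b + 1)) = (a ^ 2 + a) + (b ^ 2 + b) + (a * b + a * b)"
    by (simp add: algebra_simps power2_eq_square)
  also have "a * b + a * b = 0"
    using assms by (rule add_self_CHAR_2)
  finally have factor: "(a + b) * (a + (b + 1)) = (a ^ 2 + a) + (b ^ 2 + b)"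
    by simp
  have "a ^ 2 + a = b ^ 2 + b \<longleftrightarrow> (a ^ 2 + a) + (b ^ 2 + b) = 0"
    using assms by (rule add_eq_0_iff_CHAR_2[symmetric])
  also have "\<dots> \<longleftrightarrow> a + b = 0 \<or> a + (b + 1) = 0"
    by (simp only: factor[symmetric] mult_eq_0_iff)
  also have "\<dots> \<longleftrightarrow> a = b \<or> a = b + 1"
    using assms by (simp only: add_eq_0_iff_CHAR_2)
  finally show ?thesis .
qed

lemma artin_schreier_solvable:
  fixes x :: "'a::{field,finite}"
  assumes card: "card (UNIV :: 'a set) = 2 ^ n" and trace: "abs_trace n x = 0"
  shows "\<exists>w. w ^ 2 + w = x"
proof -
  define g where "g w = w ^ 2 + w" for w :: 'a
  define Z where "Z = {z::'a. abs_trace n z = 0}"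
  have char: "CHAR('a) = 2"
    using card by (rule CHAR_eq_2_if_card_eq_power_2)
  have "card {0, 1::'a} \<le> card (UNIV :: 'a set)"
    by (intro card_mono) auto
  then have "n \<ge> 1"
    using card by (cases n) auto
  have "card (UNIV :: 'a set) = (\<Sum>z\<in>range g. card {w. g w = z})"
    using card_eq_sum_card_fibres[of UNIV "range g" g] by simp
  also have "\<dots> = (\<Sum>z\<in>range g. 2)"
  proof (intro sum.cong refl)
    fix z assume "z \<in> range g"
    then obtain b where "z = g b"
      by auto
    then have "{w. g w = z} = {b, b + 1}"
      using artin_schreier_fibre_CHAR_2[OF char] by (auto simp: g_def)
    then show "card {w. g w = z} = 2"
      by simp
  qed
  finally have "card (range g) = 2 ^ (n - 1)"
    using card \<open>n \<ge> 1\<close> by (cases n) auto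
  moreover have "range g \<subseteq> Z"
  proof
    fix z assume "z \<in> range g"
    then obtain w where z: "z = g w"
      by auto
    have "abs_trace n (g w) = w ^ 2 ^ n + w"
      unfolding g_def using char by (rule abs_trace_artin_schreier)
    also have "w ^ 2 ^ n = w"
      using power_card_eq_self[of w] card by simp
    finally show "z \<in> Z"
      using add_self_CHAR_2[OF char] by (simp add: Z_def z)
  qed
  moreover have "card Z \<le> 2 ^ (n - 1)"
    unfolding Z_def using \<open>n \<ge> 1\<close> by (rule card_abs_trace_eq_0_le)
  ultimately have "range g = Z"
    by (intro card_seteq) auto
  then have "x \<in> range g"
    using trace by (simp add: Z_def)
  then show ?thesis
    by (auto simp: g_def)
qed

section \<open>Fixed points of \<open>f\<close>\<close>

lemma sub_power_Suc_eq_one_iff_quadratic: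
  fixes c y :: "'a::field"
  assumes char: "CHAR('a) = 2" and q: "q = 2 ^ m" and "c ^ q = c" "c \<noteq> 0"
    and y: "y ^ (q + 1) = 1"
  shows "(y - c) ^ (q + 1) = 1 \<longleftrightarrow> y ^ 2 + c * y + 1 = 0"
proof -
  have yq: "y * y ^ q = 1"
    using y by (simp add: mult.commute)
  then have "y \<noteq> 0"
    by auto
  have "(y - c) ^ (q + 1) = (y ^ q + c) * (y + c)"
    using freshmans_dream'[of q m y c] assms by (simp add: minus_CHAR_2)
  then have "(y - c) ^ (q + 1) = 1 \<longleftrightarrow> y * ((y ^ q + c) * (y + c)) = y"
    using \<open>y \<noteq> 0\<close> by (metis mult_cancel_left mult_1_right)
  also have "y * ((y ^ q + c) * (y + c)) = y + c * (y ^ 2 + c * y + 1)"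
    using yq by (simp add: algebra_simps power2_eq_square)
  also have "\<dots> = y \<longleftrightarrow> y ^ 2 + c * y + 1 = 0"
    using \<open>c \<noteq> 0\<close> by simp
  finally show ?thesis .
qed

lemma fmap_fixed_points:
  fixes c :: "'a::{field,finite}"
  assumes card: "card (UNIV :: 'a set) = q ^ 2" and q: "q = 2 ^ m"
    and "c ^ q = c" "c \<noteq> 0"
  shows "{a. fmap q c a = a} = insert 0 {a. a \<noteq> 0 \<and> (a ^ (q - 1)) ^ 2 + c * a ^ (q - 1) + 1 = 0}"
proof -
  have char: "CHAR('a) = 2"
    using card q by (rule CHAR_eq_2_if_card_eq_square_power_2)
  have "fmap q c a = a \<longleftrightarrow> (a ^ (q - 1)) ^ 2 + c * a ^ (q - 1) + 1 = 0" if "a \<noteq> 0" for a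
  proof -
    have "fmap q c a = a \<longleftrightarrow> (a ^ (q - 1) - c) ^ (q + 1) = 1"
      unfolding fmap_def using that by (metis mult_cancel_left1)
    also have "\<dots> \<longleftrightarrow> (a ^ (q - 1)) ^ 2 + c * a ^ (q - 1) + 1 = 0"
      using power_q_minus_one_root_of_unity[OF card that] char q assms
      by (intro sub_power_Suc_eq_one_iff_quadratic)
    finally show ?thesis .
  qed
  then show ?thesis
    by (auto simp: fmap_def)
qed

lemma abs_trace_inverse_of_quadratic_root:
  fixes c y :: "'a::field"
  assumes char: "CHAR('a) = 2" and q: "q = 2 ^ m" and "c ^ q = c" "c \<noteq> 0"
    and root: "y ^ 2 + c * y + 1 = 0"
  shows "abs_trace m (inverse c) = (y / c) ^ q + y / c"
proof -
  have "y ^ 2 + c * y = 1"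
    using root char by (simp add: add_eq_0_iff_CHAR_2)
  then have "(y / c) ^ 2 + y / c = inverse c ^ 2"
    using \<open>c \<noteq> 0\<close> by (simp add: field_simps power2_eq_square)
  moreover have "inverse c ^ 2 ^ m = inverse c"
    using assms by (simp add: power_inverse)
  ultimately have "abs_trace m (inverse c) = abs_trace m ((y / c) ^ 2 + y / c)"
    by (simp add: abs_trace_square)
  also have "\<dots> = (y / c) ^ q + y / c"
    using char q by (simp add: abs_trace_artin_schreier)
  finally show ?thesis .
qed

lemma abs_trace_inverse_eq_1_if_quadratic_root_of_unity:
  fixes c y :: "'a::field"
  assumes char: "CHAR('a) = 2" and q: "q = 2 ^ m" and "c ^ q = c" "c \<noteq> 0"
    and root: "y ^ 2 + c * y + 1 = 0" and y: "y ^ (q + 1) = 1"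
  shows "abs_trace m (inverse c) = 1"
proof -
  have "y ^ q * (y ^ 2 + c * y + 1) = y + c + y ^ q"
    using y by (simp add: algebra_simps power2_eq_square)
  then have "y ^ q + y = c"
    using root char by (metis add_eq_0_iff_CHAR_2 add.commute add.left_commute mult_zero_right)
  then show ?thesis
    using abs_trace_inverse_of_quadratic_root[OF assms(1-5)] assms(3,4)
    by (simp add: power_divide add_divide_distrib[symmetric])
qed

lemma quadratic_roots_CHAR_2:
  fixes c r y :: "'a::field"
  assumes char: "CHAR('a) = 2" and root: "r ^ 2 + c * r + 1 = 0"
  shows "y ^ 2 + c * y + 1 = 0 \<longleftrightarrow> y = r \<or> y = r + c"
proof -
  have "(y + r) * (y + (r + c)) = (y ^ 2 + c * y) + (r ^ 2 + c * r) + (r * y + r * y)"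
    by (simp add: algebra_simps power2_eq_square)
  also have "r ^ 2 + c * r = 1"
    using root char by (simp add: add_eq_0_iff_CHAR_2)
  also have "r * y + r * y = 0"
    using char by (rule add_self_CHAR_2)
  finally have "(y + r) * (y + (r + c)) = y ^ 2 + c * y + 1"
    by (simp add: add.assoc)
  then show ?thesis
    using char by (metis add_eq_0_iff_CHAR_2 mult_eq_0_iff)
qed

lemma quadratic_root_exists:
  fixes c :: "'a::{field,finite}"
  assumes card: "card (UNIV :: 'a set) = q ^ 2" and q: "q = 2 ^ m"
    and "c ^ q = c" "c \<noteq> 0"
  shows "\<exists>r. r ^ 2 + c * r + 1 = 0"
proof -
  have card': "card (UNIV :: 'a set) = 2 ^ (2 * m)"
    using card q by (metis power_mult mult.commute)
  then have char: "CHAR('a) = 2"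
    by (rule CHAR_eq_2_if_card_eq_power_2)
  define x where "x = inverse c ^ 2"
  have "x ^ 2 ^ m = (inverse c ^ 2 ^ m) ^ 2"
    unfolding x_def by (simp only: power_mult[symmetric] mult.commute)
  also have "inverse c ^ 2 ^ m = inverse c"
    using assms by (simp add: power_inverse)
  finally have "x ^ 2 ^ m = x"
    by (simp add: x_def)
  have "abs_trace (2 * m) x = abs_trace m x + abs_trace m (x ^ 2 ^ m)"
    using abs_trace_add[of m m x] by (simp only: mult_2)
  also have "\<dots> = 0"
    using \<open>x ^ 2 ^ m = x\<close> char by (simp add: add_self_CHAR_2)
  finally obtain w where w: "w ^ 2 + w = x"
    using artin_schreier_solvable[OF card'] by blast
  have "(c * w) ^ 2 + c * (c * w) = c ^ 2 * (w ^ 2 + w)"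
    by (simp add: algebra_simps power2_eq_square)
  also have "\<dots> = 1"
    using w \<open>c \<noteq> 0\<close> by (simp add: x_def power_inverse field_simps)
  finally have "(c * w) ^ 2 + c * (c * w) + 1 = 0"
    by (simp only: add_eq_0_iff_CHAR_2[OF char])
  then show ?thesis ..
qed

lemma quadratic_root_of_unity_if_abs_trace_1:
  fixes c y :: "'a::field"
  assumes char: "CHAR('a) = 2" and q: "q = 2 ^ m" and cq: "c ^ q = c" and "c \<noteq> 0"
    and root: "y ^ 2 + c * y + 1 = 0" and trace: "abs_trace m (inverse c) = 1"
  shows "y ^ (q + 1) = 1"
proof -
  have "(y ^ 2 + c * y + 1) ^ q = (y ^ q) ^ 2 + c * y ^ q + 1"
    using char q cq by (simp add: freshmans_dream' power_mult_distrib flip: power_mult mult.commute)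
  then have "(y ^ q) ^ 2 + c * y ^ q + 1 = 0"
    using root q by (simp add: power_0_left)
  moreover have "y ^ q \<noteq> y"
  proof
    assume "y ^ q = y"
    then have "abs_trace m (inverse c) = y / c + y / c"
      using abs_trace_inverse_of_quadratic_root[OF assms(1-5)] cq by (simp add: power_divide)
    with trace char show False
      by (simp add: add_self_CHAR_2)
  qed
  ultimately have "y ^ q = y + c"
    using quadratic_roots_CHAR_2[OF char root] by blast
  then have "y ^ (q + 1) = y ^ 2 + c * y"
    by (simp add: algebra_simps power2_eq_square)
  then show ?thesis
    using root char by (simp add: add_eq_0_iff_CHAR_2)
qed

lemma nonzero_fixed_points_empty_if_abs_trace_0:
  fixes c :: "'a::{field,finite}"
  assumes card: "card (UNIV :: 'a set) = q ^ 2" and q: "q = 2 ^ m"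
    and "c ^ q = c" "c \<noteq> 0" and trace: "abs_trace m (inverse c) = 0"
  shows "{a. a \<noteq> 0 \<and> (a ^ (q - 1)) ^ 2 + c * a ^ (q - 1) + 1 = 0} = {}"
proof -
  have "abs_trace m (inverse c) = 1"
    if "a \<noteq> 0" and "(a ^ (q - 1)) ^ 2 + c * a ^ (q - 1) + 1 = 0" for a :: 'a
    using that CHAR_eq_2_if_card_eq_square_power_2[OF card q] assms(2-4)
      power_q_minus_one_root_of_unity[OF card]
    by (intro abs_trace_inverse_eq_1_if_quadratic_root_of_unity) simp_all
  with trace show ?thesis
    by auto
qed

lemma card_nonzero_fixed_points_if_abs_trace_1:
  fixes c :: "'a::{field,finite}"
  assumes card: "card (UNIV :: 'a set) = q ^ 2" and q: "q = 2 ^ m"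
    and "c ^ q = c" "c \<noteq> 0" and trace: "abs_trace m (inverse c) = 1"
  shows "card {a. a \<noteq> 0 \<and> (a ^ (q - 1)) ^ 2 + c * a ^ (q - 1) + 1 = 0} = 2 * (q - 1)"
proof -
  have char: "CHAR('a) = 2"
    using card q by (rule CHAR_eq_2_if_card_eq_square_power_2)
  have "card {0, 1::'a} \<le> q ^ 2"
    unfolding card[symmetric] by (intro card_mono) auto
  then have "q \<ge> 2"
    using q by (cases m) auto
  obtain r where r: "r ^ 2 + c * r + 1 = 0"
    using quadratic_root_exists[OF assms(1-4)] by blast
  note roots = quadratic_roots_CHAR_2[OF char r]
  have root_of_unity: "y ^ (q + 1) = 1" if "y = r \<or> y = r + c" for y
    using quadratic_root_of_unity_if_abs_trace_1[OF char assms(2-4) _ trace] roots that by blast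
  have "r \<noteq> 0" "r + c \<noteq> 0"
    using root_of_unity[of r] root_of_unity[of "r + c"] by auto
  then have "{a. a \<noteq> 0 \<and> (a ^ (q - 1)) ^ 2 + c * a ^ (q - 1) + 1 = 0}
      = {a. a ^ (q - 1) = r} \<union> {a. a ^ (q - 1) = r + c}"
    using \<open>q \<ge> 2\<close> by (auto simp: roots power_0_left)
  moreover have "card {a::'a. a ^ (q - 1) = y} = q - 1" if "y = r \<or> y = r + c" for y
  proof (rule card_power_eq_root_of_unity)
    show "card (UNIV :: 'a set) = (q - 1) * (q + 1) + 1"
      using card \<open>q \<ge> 2\<close> by (cases q) (simp_all add: power2_eq_square)
  qed (use \<open>q \<ge> 2\<close> root_of_unity[OF that] in auto)
  moreover have "r \<noteq> r + c"
    using assms(4) by simp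
  ultimately show ?thesis
    by (simp add: card_Un_disjoint disjoint_iff)
qed

theorem mainTheorem7:
  fixes c :: "'a::{field,finite}" and q m :: nat
  assumes "q = 2 ^ m" and "m \<ge> 1"
    and "card (UNIV :: 'a set) = q ^ 2"
    and "c ^ q = c" and "c \<noteq> 0"
  shows "(abs_trace m (inverse c) = 1 \<longrightarrow> card {\<alpha>. fmap q c \<alpha> = \<alpha>} = 2 * q - 1)
       \<and> (abs_trace m (inverse c) = 0 \<longrightarrow> card {\<alpha>. fmap q c \<alpha> = \<alpha>} = 1)"
proof -
  have "q \<ge> 1"
    using assms(1) by simp
  have "card {\<alpha>. fmap q c \<alpha> = \<alpha>}
      = Suc (card {a. a \<noteq> 0 \<and> (a ^ (q - 1)) ^ 2 + c * a ^ (q - 1) + 1 = 0})"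
    using fmap_fixed_points[OF assms(3,1,4,5)] by simp
  then show ?thesis
    using nonzero_fixed_points_empty_if_abs_trace_0[OF assms(3,1,4,5)]
      card_nonzero_fixed_points_if_abs_trace_1[OF assms(3,1,4,5)] \<open>q \<ge> 1\<close>
    by auto
qed

end
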